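(* Let $n\ge 1$ and, for $i=1,\dots,n$, let $f_i:\mathbb{R}^{d_i}\to\mathbb{R}$, $A_i\in\mathbb{R}^{p\times d_i}$, and let $b\in\mathbb{R}^p$. Set $d=\sum_i d_i$, $\mathbf{x}=[x_1^\top,\dots,x_n^\top]^\top\in\mathbb{R}^d$, $f(\mathbf{x})=\sum_{i=1}^n f_i(x_i)$, $A=[A_1,\dots,A_n]\in\mathbb{R}^{p\times d}$. Consider the problem $\min_{\mathbf{x}\in\mathbb{R}^d} f(\mathbf{x})$ subject to $A\mathbf{x}=b$ (i.e. all local constraint sets are $\mathcal{X}_i=\mathbb{R}^{d_i}$), assumed to have at least one optimal solution. Suppose each $f_i$ is convex and differentiable on $\mathbb{R}^{d_i}$ with locally Lipschitz gradient $\nabla f_i$, and that there exists $\mathbf{x}$ with $A\mathbf{x}=b$. Fix $\alpha>0$ and consider the augmented primal-dual gradient dynamics (APGD) $$\dot{\mathbf{x}}=-\alpha\big(\nabla f(\mathbf{x})+A^\top\lambda\big)-A^\top(A\mathbf{x}-b),\qquad \dot\lambda=A\mathbf{x}-b,$$ where $\nabla f(\mathbf{x})=[\nabla f_1(x_1)^\top,\dots,\nabla f_n(x_n)^\top]^\top$. Then for every initial point $(\mathbf{x}(0),\lambda(0))\in\mathbb{R}^d\times\mathbb{R}^p$, the trajectory $(\mathbf{x}(t),\lambda(t))$ converges to a saddle point of the augmented Lagrangian $\mathcal{L}_\alpha(\mathbf{x},\lambda)=f(\mathbf{x})+\lambda^\top(A\mathbf{x}-b)+\frac{1}{2\alpha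}\|A\mathbf{x}-b\|^2$.
   Context: A saddle point of $\mathcal{L}_\alpha$ is a pair $(\mathbf{x}^*,\lambda^* )\in\mathbb{R}^d\times\mathbb{R}^p$ with $\mathcal{L}_\alpha(\mathbf{x}^*,\lambda)\le\mathcal{L}_\alpha(\mathbf{x}^*,\lambda^* )\le\mathcal{L}_\alpha(\mathbf{x},\lambda^* )$ for all $\mathbf{x}\in\mathbb{R}^d$, $\lambda\in\mathbb{R}^p$. No structural assumption on $A$ (such as full row rank) is made. *)

theory Defs
  imports "HOL-Analysis.Analysis"
begin

definition locally_lipschitz :: "('a::metric_space \<Rightarrow> 'b::metric_space) \<Rightarrow> bool" where
  "locally_lipschitz g \<longleftrightarrow> (\<forall>z. \<exists>U L. open U \<and> z \<in> U \<and> L-lipschitz_on U g)"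

definition aug_lagrangian ::
  "real \<Rightarrow> (real^'d \<Rightarrow> real) \<Rightarrow> real^'d^'p \<Rightarrow> real^'p \<Rightarrow> real^'d \<Rightarrow> real^'p \<Rightarrow> real" where
  "aug_lagrangian \<alpha> f A b x lam =
     f x + lam \<bullet> (A *v x - b) + (1 / (2 * \<alpha>)) * (norm (A *v x - b))\<^sup>2"

definition is_saddle_point ::
  "real \<Rightarrow> (real^'d \<Rightarrow> real) \<Rightarrow> real^'d^'p \<Rightarrow> real^'p \<Rightarrow> real^'d \<Rightarrow> real^'p \<Rightarrow> bool" where
  "is_saddle_point \<alpha> f A b xs ls \<longleftrightarrow>
     (\<forall>lam. aug_lagrangian \<alpha> f A b xs lam \<le> aug_lagrangian \<alpha> f A b xs ls) \<and>
     (\<forall>x. aug_lagrangian \<alpha> f A b xs ls \<le> aug_lagrangian \<alpha> f A b x ls)"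

end

theory Submission
  imports Defs
begin

text \<open>
  A solution p of the constrained problem has a Lagrange multiplier q, and (p, q) is a saddle point
  of the augmented Lagrangian. Along the APGD flow the weighted distance
  V = |x - p|^2 + \<alpha> |\<lambda> - q|^2 has derivative
  -2 \<alpha> (x - p) \<bullet> (\<nabla>f x - \<nabla>f p) - 2 |A x - b|^2 \<le> 0 (monotonicity of the gradient of a
  convex function), so the trajectory stays bounded. Barbalat's lemma applied to V shows that both
  terms of this derivative vanish asymptotically, and applied once more to A x - b it shows
  A x' \<longlongrightarrow> 0. At a limit point of the trajectory these three limits force the KKT conditions;
  V centred at this new KKT point is again nonincreasing and tends to 0 along a subsequence, so the
  whole trajectory converges to it.
\<close>

section \<open>Convex functions and their gradients\<close>

lemma gderiv_along_line:
  fixes F :: "'a::real_inner \<Rightarrow> real"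
  assumes "GDERIV F u :> D"
  shows "((\<lambda>t. F (u + t *\<^sub>R v)) has_real_derivative D \<bullet> v) (at 0)"
proof -
  have "((\<lambda>t. u + t *\<^sub>R v) has_derivative (\<lambda>t. t *\<^sub>R v)) (at 0)"
    by (auto intro!: derivative_eq_intros)
  moreover have "(F has_derivative (\<lambda>h. h \<bullet> D)) (at (u + 0 *\<^sub>R v))"
    using assms by (simp add: gderiv_def)
  ultimately have "((\<lambda>t. F (u + t *\<^sub>R v)) has_derivative (\<lambda>t. (t *\<^sub>R v) \<bullet> D)) (at 0)"
    by (rule has_derivative_compose)
  then show ?thesis
    unfolding has_field_derivative_def by (simp add: inner_commute mult.commute[of _ "D \<bullet> v"])
qed

lemma gderiv_inner_eq_0_if_min_on_line:
  fixes F :: "'a::real_inner \<Rightarrow> real"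
  assumes "GDERIV F u :> D" and "\<And>t. F u \<le> F (u + t *\<^sub>R v)"
  shows "D \<bullet> v = 0"
  by (rule DERIV_local_min[OF gderiv_along_line[OF assms(1)], where d = 1]) (use assms(2) in auto)

lemma convex_on_gderiv_imp_above_tangent:
  fixes F :: "'a::real_inner \<Rightarrow> real"
  assumes convex: "convex_on UNIV F" and "GDERIV F u :> D"
  shows "F u + D \<bullet> (v - u) \<le> F v"
proof -
  define \<phi> where "\<phi> t = F (u + t *\<^sub>R (v - u))" for t :: real
  have "convex_on UNIV \<phi>"
  proof (rule convex_onI)
    fix t p q :: real assume "0 < t" "t < 1"
    moreover have "u + ((1 - t) * p + t * q) *\<^sub>R (v - u)
        = (1 - t) *\<^sub>R (u + p *\<^sub>R (v - u)) + t *\<^sub>R (u + q *\<^sub>R (v - u))"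
      by (simp add: algebra_simps)
    ultimately show "\<phi> ((1 - t) *\<^sub>R p + t *\<^sub>R q) \<le> (1 - t) * \<phi> p + t * \<phi> q"
      unfolding \<phi>_def using convex_onD[OF convex, of t] by simp
  qed simp
  moreover have "(\<phi> has_real_derivative D \<bullet> (v - u)) (at 0)"
    unfolding \<phi>_def by (rule gderiv_along_line) fact
  ultimately have "\<phi> 1 - \<phi> 0 \<ge> D \<bullet> (v - u) * (1 - 0)"
    by (intro convex_on_imp_above_tangent) auto
  then show ?thesis
    unfolding \<phi>_def by simp
qed

lemma convex_on_gderiv_monotone:
  fixes F :: "'a::real_inner \<Rightarrow> real"
  assumes "convex_on UNIV F" and "\<And>u. GDERIV F u :> DF u"
  shows "0 \<le> (u - v) \<bullet> (DF u - DF v)"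
  using convex_on_gderiv_imp_above_tangent[OF assms(1) assms(2), of u v]
    convex_on_gderiv_imp_above_tangent[OF assms(1) assms(2), of v u]
  by (simp add: inner_diff_left inner_diff_right inner_commute)

text \<open>The Bregman distance of F from v vanishes at u and is nonnegative, so u minimises it and
  its gradient DF u - DF v there is zero.\<close>
lemma convex_on_gderiv_eq_if_inner_eq_0:
  fixes F :: "'a::real_inner \<Rightarrow> real"
  assumes convex: "convex_on UNIV F" and grad: "\<And>u. GDERIV F u :> DF u"
    and "(u - v) \<bullet> (DF u - DF v) = 0"
  shows "DF u = DF v"
proof -
  define h where "h w = F w - F v - DF v \<bullet> (w - v)" for w
  have "h u = 0"
    using convex_on_gderiv_imp_above_tangent[OF convex grad, of u v]
      convex_on_gderiv_imp_above_tangent[OF convex grad, of v u] assms(3)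
    unfolding h_def by (simp add: inner_diff_left inner_diff_right inner_commute)
  moreover have "0 \<le> h w" for w
    using convex_on_gderiv_imp_above_tangent[OF convex grad, of v w] unfolding h_def by simp
  moreover have "GDERIV h u :> DF u - DF v"
    unfolding h_def gderiv_def using grad[of u, unfolded gderiv_def]
    by (auto intro!: derivative_eq_intros simp: inner_diff_right inner_commute)
  ultimately have "(DF u - DF v) \<bullet> (DF u - DF v) = 0"
    by (intro gderiv_inner_eq_0_if_min_on_line[where F = h]) auto
  then show ?thesis
    by simp
qed

lemma convex_on_sum_fun:
  assumes "finite I" and "convex S" and "\<And>i. i \<in> I \<Longrightarrow> convex_on S (f i)"
  shows "convex_on S (\<lambda>u. \<Sum>i\<in>I. f i u)"
  using assms by (induction I rule: finite_induct) (auto simp: convex_on_const)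

lemma locally_lipschitz_imp_continuous_on:
  assumes "locally_lipschitz g"
  shows "continuous_on UNIV g"
proof -
  have "isCont g u" for u
  proof -
    obtain U L where "open U" "u \<in> U" "L-lipschitz_on U g"
      using assms unfolding locally_lipschitz_def by blast
    then show ?thesis
      using lipschitz_on_continuous_on continuous_on_eq_continuous_at by blast
  qed
  then show ?thesis
    by (simp add: continuous_at_imp_continuous_on)
qed

section \<open>Lagrange multipliers and saddle points\<close>

lemma inner_transpose_right: "(u::real^'n) \<bullet> (transpose A *v w) = (A *v u) \<bullet> (w::real^'m)"
  by (metis dot_lmul_matrix inner_commute transpose_matrix_vector)

lemma transpose_mult_eq_0_if_mult_transpose_mult_eq_0:
  fixes A :: "real^'n^'m"
  assumes "A *v (transpose A *v w) = 0"
  shows "transpose A *v w = 0"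
proof -
  have "(transpose A *v w) \<bullet> (transpose A *v w) = 0"
    using assms by (simp only: inner_transpose_right inner_zero_left)
  then show ?thesis
    by simp
qed

lemma in_range_transpose_if_orthogonal_null_space:
  fixes A :: "real^'n^'m"
  assumes "\<And>v. A *v v = 0 \<Longrightarrow> w \<bullet> v = 0"
  shows "\<exists>\<mu>. w = transpose A *v \<mu>"
proof -
  define U where "U = range (\<lambda>\<mu>. transpose A *v \<mu>)"
  have "subspace U"
    unfolding U_def by (intro linear_subspace_image subspace_UNIV matrix_vector_mul_linear)
  have "w \<in> U\<^sup>\<bottom>\<^sup>\<bottom>"
  proof (clarsimp simp: orthogonal_comp_def orthogonal_def)
    fix v assume "\<forall>u\<in>U. u \<bullet> v = 0"
    then have "(transpose A *v (A *v v)) \<bullet> v = 0"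
      unfolding U_def by blast
    then have "(A *v v) \<bullet> (A *v v) = 0"
      by (simp only: inner_commute[of _ v] inner_transpose_right)
    then have "A *v v = 0"
      by simp
    then show "v \<bullet> w = 0"
      using assms by (simp add: inner_commute)
  qed
  then have "w \<in> U"
    by (simp only: orthogonal_comp_self[OF \<open>subspace U\<close>])
  then show ?thesis
    unfolding U_def by blast
qed

lemma continuous_on_matrix_vector_mult [continuous_intros]:
  fixes M :: "real^'n^'m"
  shows "continuous_on S f \<Longrightarrow> continuous_on S (\<lambda>w. M *v f w)"
  by (rule bounded_linear.continuous_on[OF matrix_vector_mul_bounded_linear])

definition kkt_point :: "(real^'d \<Rightarrow> real^'d) \<Rightarrow> real^'d^'p \<Rightarrow> real^'p \<Rightarrow> (real^'d) \<times> (real^'p) \<Rightarrow> bool"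
  where "kkt_point DF A b c \<longleftrightarrow> A *v fst c = b \<and> DF (fst c) + transpose A *v snd c = 0"

lemma kkt_point_if_minimizer:
  fixes F :: "real^'d \<Rightarrow> real" and A :: "real^'d^'p"
  assumes grad: "\<And>u. GDERIV F u :> DF u"
    and feasible: "A *v p = b" and minimal: "\<And>v. A *v v = b \<Longrightarrow> F p \<le> F v"
  shows "\<exists>q. kkt_point DF A b (p, q)"
proof -
  have "- DF p \<bullet> v = 0" if "A *v v = 0" for v
    using that feasible
    by (simp, intro gderiv_inner_eq_0_if_min_on_line[OF grad] minimal)
       (simp add: matrix_vector_right_distrib matrix_vector_mult_scaleR)
  then obtain \<mu> where "- DF p = transpose A *v \<mu>"
    using in_range_transpose_if_orthogonal_null_space by blast
  then have "kkt_point DF A b (p, \<mu>)"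
    using feasible by (simp only: kkt_point_def fst_conv snd_conv neg_eq_iff_add_eq_0 simp_thms)
  then show ?thesis ..
qed

lemma is_saddle_point_if_kkt_point:
  fixes F :: "real^'d \<Rightarrow> real" and A :: "real^'d^'p"
  assumes convex: "convex_on UNIV F" and grad: "\<And>u. GDERIV F u :> DF u"
    and "\<alpha> > 0" and kkt: "kkt_point DF A b (p, q)"
  shows "is_saddle_point \<alpha> F A b p q"
  unfolding is_saddle_point_def
proof (intro conjI allI)
  have feasible: "A *v p = b" and stationary: "DF p = - (transpose A *v q)"
    using kkt by (auto simp: kkt_point_def eq_neg_iff_add_eq_0)
  fix l u
  show "aug_lagrangian \<alpha> F A b p l \<le> aug_lagrangian \<alpha> F A b p q"
    by (simp add: aug_lagrangian_def feasible)
  have "DF p \<bullet> (u - p) = - (q \<bullet> (A *v u - b))"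
    using stationary feasible by (simp add: dot_lmul_matrix matrix_vector_mult_diff_distrib)
  then have "F p \<le> F u + q \<bullet> (A *v u - b)"
    using convex_on_gderiv_imp_above_tangent[OF convex grad, of p u] by simp
  moreover have "0 \<le> (1 / (2 * \<alpha>)) * (norm (A *v u - b))\<^sup>2"
    using \<open>\<alpha> > 0\<close> by simp
  ultimately show "aug_lagrangian \<alpha> F A b p q \<le> aug_lagrangian \<alpha> F A b u q"
    by (simp add: aug_lagrangian_def feasible)
qed

section \<open>Asymptotics of functions on the half line\<close>

lemma antimono_if_has_real_derivative_nonpos:
  fixes W :: "real \<Rightarrow> real"
  assumes deriv: "\<And>t. 0 \<le> t \<Longrightarrow> (W has_real_derivative W' t) (at t within {0..})"
    and nonpos: "\<And>t. 0 \<le> t \<Longrightarrow> W' t \<le> 0" and "0 \<le> s" "s \<le> t"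
  shows "W t \<le> W s"
proof (rule DERIV_nonpos_imp_decreasing_open[OF \<open>s \<le> t\<close>])
  have "continuous_on {0..} W"
    using deriv by (auto simp: continuous_on_eq_continuous_within intro: DERIV_continuous)
  then show "continuous_on {s..t} W"
    by (rule continuous_on_subset) (use \<open>0 \<le> s\<close> in auto)
  fix r assume "s < r"
  then have "at r within {0..} = at r"
    using \<open>0 \<le> s\<close> by (intro at_within_interior) auto
  then show "\<exists>y. (W has_real_derivative y) (at r) \<and> y \<le> 0"
    using deriv[of r] nonpos[of r] \<open>0 \<le> s\<close> \<open>s < r\<close> by auto
qed

lemma tendsto_INF_if_antimono:
  fixes W :: "real \<Rightarrow> real"
  assumes antimono: "\<And>s t. 0 \<le> s \<Longrightarrow> s \<le> t \<Longrightarrow> W t \<le> W s" and "\<And>t. 0 \<le> t \<Longrightarrow> c \<le> W t"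
  shows "(W \<longlongrightarrow> (INF t\<in>{0..}. W t)) at_top"
proof (rule decreasing_tendsto)
  have bdd: "bdd_below (W ` {0..})"
    using assms(2) by (intro bdd_belowI2[of _ c]) auto
  then show "\<forall>\<^sub>F t in at_top. (INF t\<in>{0..}. W t) \<le> W t"
    unfolding eventually_at_top_linorder by (intro exI[of _ 0]) (auto intro: cInf_lower)
  fix y assume "(INF t\<in>{0..}. W t) < y"
  then obtain t\<^sub>0 where "0 \<le> t\<^sub>0" "W t\<^sub>0 < y"
    using bdd by (auto simp: cInf_less_iff)
  then show "\<forall>\<^sub>F t in at_top. W t < y"
    unfolding eventually_at_top_linorder by (intro exI[of _ t\<^sub>0]) (use antimono in force)
qed

lemma tendsto_zero_if_uniformly_continuous_derivative:
  fixes \<psi> :: "real \<Rightarrow> 'a::real_normed_vector"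
  assumes deriv: "\<And>t. 0 \<le> t \<Longrightarrow> (\<psi> has_vector_derivative \<psi>' t) (at t within {0..})"
    and lim: "(\<psi> \<longlongrightarrow> L) at_top" and uc: "uniformly_continuous_on {0..} \<psi>'"
  shows "(\<psi>' \<longlongrightarrow> 0) at_top"
proof (rule tendstoI)
  fix e :: real assume "e > 0"
  then obtain d where "d > 0"
    and d: "\<And>s t. s \<in> {0..} \<Longrightarrow> t \<in> {0..} \<Longrightarrow> dist s t < d \<Longrightarrow> dist (\<psi>' s) (\<psi>' t) \<le> e / 2"
    using uc unfolding uniformly_continuous_on_def by (metis half_gt_zero less_eq_real_def)
  define h where "h = d / 2"
  have "h > 0"
    using \<open>d > 0\<close> by (simp add: h_def)
  obtain T where T: "\<And>t. T \<le> t \<Longrightarrow> dist (\<psi> t) L < e * h / 4"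
    using tendstoD[OF lim, of "e * h / 4"] \<open>h > 0\<close> \<open>e > 0\<close> by (auto simp: eventually_at_top_linorder)
  show "\<forall>\<^sub>F t in at_top. dist (\<psi>' t) 0 < e"
    unfolding eventually_at_top_linorder
  proof (intro exI allI impI)
    fix t assume "max T 0 \<le> t"
    have "norm (\<psi> (t + h) - \<psi> t - (t + h - t) *\<^sub>R \<psi>' t) \<le> norm (t + h - t) * (e / 2)"
    proof (rule vector_differentiable_bound_linearization[where S = "{t..t + h}"])
      fix s assume "s \<in> {t..t + h}"
      then show "(\<psi> has_vector_derivative \<psi>' s) (at s within {t..t + h})"
        using deriv[of s] \<open>max T 0 \<le> t\<close> by (auto intro: has_vector_derivative_within_subset)
      show "norm (\<psi>' s - \<psi>' t) \<le> e / 2"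
        using d[of s t] \<open>s \<in> {t..t + h}\<close> \<open>max T 0 \<le> t\<close> \<open>h > 0\<close> by (auto simp: h_def dist_norm)
    qed (use \<open>h > 0\<close> in \<open>auto simp: closed_segment_eq_real_ivl\<close>)
    then have "norm (\<psi> (t + h) - \<psi> t - h *\<^sub>R \<psi>' t) \<le> h * e / 2"
      using \<open>h > 0\<close> by simp
    moreover have "norm (\<psi> (t + h) - \<psi> t) < h * e / 2"
      using T[of t] T[of "t + h"] \<open>max T 0 \<le> t\<close> \<open>h > 0\<close> dist_triangle2[of "\<psi> (t + h)" "\<psi> t" L]
      by (simp add: dist_norm mult.commute)
    ultimately have "norm (h *\<^sub>R \<psi>' t) < h * e"
      using norm_triangle_ineq4[of "\<psi> (t + h) - \<psi> t" "\<psi> (t + h) - \<psi> t - h *\<^sub>R \<psi>' t"] by simp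
    then show "dist (\<psi>' t) 0 < e"
      using \<open>h > 0\<close> by simp
  qed
qed

lemma eq_limit_at_limit_point:
  fixes H :: "'a::metric_space \<Rightarrow> 'b::t2_space"
  assumes "continuous_on UNIV H" and "((\<lambda>t. H (g t)) \<longlongrightarrow> L) at_top"
    and "filterlim s at_top sequentially" and "(\<lambda>n. g (s n)) \<longlonglongrightarrow> c"
  shows "H c = L"
proof (rule LIMSEQ_unique)
  have "isCont H c"
    using assms(1) continuous_on_eq_continuous_at open_UNIV by blast
  then show "(\<lambda>n. H (g (s n))) \<longlonglongrightarrow> H c"
    by (rule isCont_tendsto_compose[OF _ assms(4)])
  show "(\<lambda>n. H (g (s n))) \<longlonglongrightarrow> L"
    using filterlim_compose[OF assms(2,3)] .
qed

section \<open>The augmented primal-dual gradient dynamics\<close>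

locale apgd =
  fixes F :: "real^'d::finite \<Rightarrow> real" and DF :: "real^'d \<Rightarrow> real^'d"
    and A :: "real^'d^'p::finite" and b :: "real^'p" and \<alpha> :: real
    and x :: "real \<Rightarrow> real^'d" and lam :: "real \<Rightarrow> real^'p"
  assumes convex: "convex_on UNIV F"
    and grad: "\<And>u. GDERIV F u :> DF u"
    and continuous_grad: "continuous_on UNIV DF"
    and alpha_pos: "\<alpha> > 0"
    and ode_x: "\<And>t. t \<ge> 0 \<Longrightarrow> (x has_vector_derivative
        (- \<alpha> *\<^sub>R (DF (x t) + transpose A *v lam t) - transpose A *v (A *v x t - b))) (at t within {0..})"
    and ode_lam: "\<And>t. t \<ge> 0 \<Longrightarrow> (lam has_vector_derivative (A *v x t - b)) (at t within {0..})"
begin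

abbreviation kkt :: "(real^'d) \<times> (real^'p) \<Rightarrow> bool" where
  "kkt \<equiv> kkt_point DF A b"

definition z :: "real \<Rightarrow> (real^'d) \<times> (real^'p)" where
  "z t = (x t, lam t)"

definition primal_field :: "(real^'d) \<times> (real^'p) \<Rightarrow> real^'d" where
  "primal_field w = - \<alpha> *\<^sub>R (DF (fst w) + transpose A *v snd w) - transpose A *v (A *v fst w - b)"

definition vector_field :: "(real^'d) \<times> (real^'p) \<Rightarrow> (real^'d) \<times> (real^'p)" where
  "vector_field w = (primal_field w, A *v fst w - b)"

lemma has_vector_derivative_z:
  "t \<ge> 0 \<Longrightarrow> (z has_vector_derivative vector_field (z t)) (at t within {0..})"
  unfolding z_def vector_field_def primal_field_def fst_conv snd_conv
  by (intro has_vector_derivative_Pair ode_x ode_lam)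

lemma continuous_on_DF [continuous_intros]: "continuous_on S f \<Longrightarrow> continuous_on S (\<lambda>w. DF (f w))"
  by (rule continuous_on_compose2[OF continuous_grad]) auto

lemma continuous_on_primal_field: "continuous_on UNIV primal_field"
  unfolding primal_field_def by (intro continuous_intros)

lemma continuous_on_vector_field: "continuous_on UNIV vector_field"
  unfolding vector_field_def by (intro continuous_intros continuous_on_primal_field)

definition lyapunov :: "(real^'d) \<times> (real^'p) \<Rightarrow> (real^'d) \<times> (real^'p) \<Rightarrow> real" where
  "lyapunov c w = (norm (fst w - fst c))\<^sup>2 + \<alpha> * (norm (snd w - snd c))\<^sup>2"

definition lyapunov_rate :: "(real^'d) \<times> (real^'p) \<Rightarrow> (real^'d) \<times> (real^'p) \<Rightarrow> real" where
  "lyapunov_rate c w =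
     2 * ((fst w - fst c) \<bullet> primal_field w) + 2 * \<alpha> * ((snd w - snd c) \<bullet> (A *v fst w - b))"

lemma has_real_derivative_lyapunov:
  assumes "t \<ge> 0"
  shows "((\<lambda>t. lyapunov c (z t)) has_real_derivative lyapunov_rate c (z t)) (at t within {0..})"
proof -
  have dx: "(x has_derivative (\<lambda>h. h *\<^sub>R primal_field (z t))) (at t within {0..})"
    using ode_x[OF assms] by (simp add: primal_field_def z_def has_vector_derivative_def)
  have dlam: "(lam has_derivative (\<lambda>h. h *\<^sub>R (A *v x t - b))) (at t within {0..})"
    using ode_lam[OF assms] by (simp add: has_vector_derivative_def)
  have "((\<lambda>t. (x t - fst c) \<bullet> (x t - fst c) + \<alpha> * ((lam t - snd c) \<bullet> (lam t - snd c)))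
      has_derivative (*) (lyapunov_rate c (z t))) (at t within {0..})"
    by (rule derivative_eq_intros dx dlam refl)+
       (simp add: lyapunov_rate_def z_def inner_commute algebra_simps fun_eq_iff)
  then show ?thesis
    by (simp add: has_field_derivative_def lyapunov_def z_def power2_norm_eq_inner)
qed

lemma lyapunov_rate_eq:
  assumes "kkt c"
  shows "lyapunov_rate c w =
    - 2 * \<alpha> * ((fst w - fst c) \<bullet> (DF (fst w) - DF (fst c))) - 2 * (norm (A *v fst w - b))\<^sup>2"
proof -
  obtain p q where c: "c = (p, q)"
    by fastforce
  obtain u l where w: "w = (u, l)"
    by fastforce
  have feasible: "A *v (u - p) = A *v u - b" and stationary: "DF p = - (transpose A *v q)"
    using assms by (auto simp: c kkt_point_def matrix_vector_mult_diff_distrib eq_neg_iff_add_eq_0)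
  have primal: "(u - p) \<bullet> primal_field (u, l)
      = - \<alpha> * ((u - p) \<bullet> DF u + (A *v u - b) \<bullet> l) - (A *v u - b) \<bullet> (A *v u - b)"
    unfolding primal_field_def fst_conv snd_conv
    by (simp only: inner_diff_right inner_scaleR_right inner_add_right inner_transpose_right feasible)
  have gradient: "(u - p) \<bullet> (DF u - DF p) = (u - p) \<bullet> DF u + (A *v u - b) \<bullet> q"
    by (simp only: inner_diff_right stationary inner_minus_right inner_transpose_right feasible
        diff_minus_eq_add inner_add_right)
  have dual: "(l - q) \<bullet> (A *v u - b) = (A *v u - b) \<bullet> l - (A *v u - b) \<bullet> q"
    by (simp add: inner_diff_left inner_commute)
  show ?thesis
    unfolding lyapunov_rate_def c w fst_conv snd_conv power2_norm_eq_inner primal gradient dual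
    by (simp add: algebra_simps del: inner_add inner_diff)
qed

lemma lyapunov_rate_nonpos:
  assumes "kkt c"
  shows "lyapunov_rate c w \<le> 0"
proof -
  have "0 \<le> (fst w - fst c) \<bullet> (DF (fst w) - DF (fst c))"
    by (rule convex_on_gderiv_monotone[OF convex grad])
  then have "0 \<le> \<alpha> * ((fst w - fst c) \<bullet> (DF (fst w) - DF (fst c)))"
    using alpha_pos by simp
  then show ?thesis
    unfolding lyapunov_rate_eq[OF assms] using zero_le_power2[of "norm (A *v fst w - b)"] by linarith
qed

lemma lyapunov_antimono:
  assumes "kkt c" and "0 \<le> s" "s \<le> t"
  shows "lyapunov c (z t) \<le> lyapunov c (z s)"
  using has_real_derivative_lyapunov lyapunov_rate_nonpos[OF \<open>kkt c\<close>] assms(2,3)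
  by (rule antimono_if_has_real_derivative_nonpos)

lemma lyapunov_nonneg: "0 \<le> lyapunov c w"
  unfolding lyapunov_def using alpha_pos by simp

lemma norm_le_lyapunov: "(norm (w - c))\<^sup>2 \<le> (1 + 1 / \<alpha>) * lyapunov c w"
proof -
  have "(norm (w - c))\<^sup>2 = (norm (fst w - fst c))\<^sup>2 + (norm (snd w - snd c))\<^sup>2"
    by (cases w, cases c) (simp add: norm_Pair)
  also have "\<dots> \<le> (1 + 1 / \<alpha>) * lyapunov c w"
    using alpha_pos by (simp add: lyapunov_def field_simps)
  finally show ?thesis .
qed

lemma bounded_trajectory:
  assumes "kkt c"
  shows "bounded (z ` {0..})"
proof -
  have "dist c (z t) \<le> sqrt ((1 + 1 / \<alpha>) * lyapunov c (z 0))" if "0 \<le> t" for t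
  proof (rule real_le_rsqrt)
    have "(dist c (z t))\<^sup>2 \<le> (1 + 1 / \<alpha>) * lyapunov c (z t)"
      using norm_le_lyapunov[of "z t" c] by (simp add: dist_norm norm_minus_commute)
    also have "\<dots> \<le> (1 + 1 / \<alpha>) * lyapunov c (z 0)"
      using lyapunov_antimono[OF assms order_refl that] alpha_pos by (intro mult_left_mono) auto
    finally show "(dist c (z t))\<^sup>2 \<le> (1 + 1 / \<alpha>) * lyapunov c (z 0)" .
  qed
  then show ?thesis
    unfolding bounded_def by blast
qed

lemma lipschitz_trajectory:
  assumes "kkt c"
  obtains B where "B-lipschitz_on {0..} z"
proof -
  have "compact (vector_field ` closure (z ` {0..}))"
    using bounded_trajectory[OF assms]
    by (intro compact_continuous_image continuous_on_subset[OF continuous_on_vector_field]) auto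
  then obtain B where "B > 0" and B: "\<And>w. w \<in> closure (z ` {0..}) \<Longrightarrow> norm (vector_field w) \<le> B"
    by (auto dest!: compact_imp_bounded simp: bounded_pos)
  have "B-lipschitz_on {0..} z"
  proof (rule bounded_derivative_imp_lipschitz)
    fix t :: real assume "t \<in> {0..}"
    then show "(z has_derivative (\<lambda>h. h *\<^sub>R vector_field (z t))) (at t within {0..})"
      using has_vector_derivative_z by (simp add: has_vector_derivative_def)
    have "z t \<in> closure (z ` {0..})"
      using \<open>t \<in> {0..}\<close> by (intro closure_subset[THEN subsetD]) auto
    then show "onorm (\<lambda>h. h *\<^sub>R vector_field (z t)) \<le> B"
      using B by (simp add: onorm_scaleR_left[OF bounded_linear_ident] onorm_id)
  qed (use \<open>B > 0\<close> in auto)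
  then show ?thesis ..
qed

lemma uniformly_continuous_on_trajectory:
  fixes H :: "(real^'d) \<times> (real^'p) \<Rightarrow> 'a::metric_space"
  assumes "kkt c" and "continuous_on UNIV H"
  shows "uniformly_continuous_on {0..} (\<lambda>t. H (z t))"
proof (rule uniformly_continuous_on_compose[where g = z])
  obtain B where "B-lipschitz_on {0..} z"
    using lipschitz_trajectory[OF assms(1)] .
  then show "uniformly_continuous_on {0..} z"
    by (rule lipschitz_on_uniformly_continuous)
  have "uniformly_continuous_on (closure (z ` {0..})) H"
    using bounded_trajectory[OF assms(1)]
    by (intro compact_uniformly_continuous continuous_on_subset[OF assms(2)]) auto
  then show "uniformly_continuous_on (z ` {0..}) H"
    unfolding uniformly_continuous_on_def by (meson closure_subset subsetD)
qed

lemma lyapunov_rate_tendsto_0: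
  assumes "kkt c"
  shows "((\<lambda>t. lyapunov_rate c (z t)) \<longlongrightarrow> 0) at_top"
proof (rule tendsto_zero_if_uniformly_continuous_derivative)
  show "((\<lambda>t. lyapunov c (z t)) has_vector_derivative lyapunov_rate c (z t)) (at t within {0..})"
    if "0 \<le> t" for t
    using has_real_derivative_lyapunov[OF that] by (simp add: has_real_derivative_iff_has_vector_derivative)
  show "((\<lambda>t. lyapunov c (z t)) \<longlongrightarrow> (INF t\<in>{0..}. lyapunov c (z t))) at_top"
    using lyapunov_antimono[OF assms] lyapunov_nonneg by (rule tendsto_INF_if_antimono)
  show "uniformly_continuous_on {0..} (\<lambda>t. lyapunov_rate c (z t))"
    unfolding lyapunov_rate_def
    by (intro uniformly_continuous_on_trajectory[OF assms] continuous_intros continuous_on_primal_field)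
qed

lemma residual_tendsto_0:
  assumes "kkt c"
  shows "((\<lambda>t. A *v x t - b) \<longlongrightarrow> 0) at_top"
proof (rule Lim_null_comparison)
  have "(norm (A *v x t - b))\<^sup>2 \<le> - lyapunov_rate c (z t) / 2" for t
  proof -
    have "0 \<le> (x t - fst c) \<bullet> (DF (x t) - DF (fst c))"
      by (rule convex_on_gderiv_monotone[OF convex grad])
    then have "0 \<le> \<alpha> * ((x t - fst c) \<bullet> (DF (x t) - DF (fst c)))"
      using alpha_pos by simp
    then have "2 * (norm (A *v x t - b))\<^sup>2 \<le> - lyapunov_rate c (z t)"
      unfolding lyapunov_rate_eq[OF assms] z_def fst_conv by linarith
    then show ?thesis
      by simp
  qed
  then show "\<forall>\<^sub>F t in at_top. norm (A *v x t - b) \<le> sqrt (- lyapunov_rate c (z t) / 2)"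
    by (intro always_eventually allI real_le_rsqrt)
  show "((\<lambda>t. sqrt (- lyapunov_rate c (z t) / 2)) \<longlongrightarrow> 0) at_top"
    using tendsto_real_sqrt[OF tendsto_divide[OF tendsto_minus[OF lyapunov_rate_tendsto_0[OF assms]]
        tendsto_const[of 2]]]
    by simp
qed

lemma A_primal_field_tendsto_0:
  assumes "kkt c"
  shows "((\<lambda>t. A *v primal_field (z t)) \<longlongrightarrow> 0) at_top"
proof (rule tendsto_zero_if_uniformly_continuous_derivative)
  show "((\<lambda>t. A *v x t - b) has_vector_derivative A *v primal_field (z t)) (at t within {0..})"
    if "0 \<le> t" for t
  proof -
    have "(x has_vector_derivative primal_field (z t)) (at t within {0..})"
      using ode_x[OF that] by (simp add: primal_field_def z_def)
    from bounded_linear.has_vector_derivative[OF matrix_vector_mul_bounded_linear this]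
    have "((\<lambda>t. A *v x t) has_vector_derivative A *v primal_field (z t)) (at t within {0..})" .
    then show ?thesis
      using has_vector_derivative_diff[OF _ has_vector_derivative_const[of b]] by fastforce
  qed
  show "((\<lambda>t. A *v x t - b) \<longlongrightarrow> 0) at_top"
    by (rule residual_tendsto_0[OF assms])
  show "uniformly_continuous_on {0..} (\<lambda>t. A *v primal_field (z t))"
    by (intro uniformly_continuous_on_trajectory[OF assms] continuous_intros continuous_on_primal_field)
qed

lemma limit_point_exists:
  assumes "kkt c"
  obtains s c' where "filterlim s at_top sequentially" and "(\<lambda>n. z (s n)) \<longlonglongrightarrow> c'"
proof -
  have "bounded (range (\<lambda>n. z (real n)))"
    using bounded_trajectory[OF assms] by (rule bounded_subset) auto
  then obtain r c' where "strict_mono r" and "((\<lambda>n. z (real n)) \<circ> r) \<longlonglongrightarrow> c'"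
    using bounded_imp_convergent_subsequence by blast
  moreover have "filterlim (\<lambda>n. real (r n)) at_top sequentially"
    by (rule filterlim_compose[OF filterlim_real_sequentially filterlim_subseq[OF \<open>strict_mono r\<close>]])
  ultimately show ?thesis
    using that by (simp add: o_def)
qed

lemma kkt_point_if_rate_and_residuals_vanish:
  assumes "kkt c" and "lyapunov_rate c c' = 0" and feasible: "A *v fst c' = b"
    and "A *v primal_field c' = 0"
  shows "kkt c'"
proof -
  obtain p q where c: "c = (p, q)"
    by fastforce
  obtain u l where c': "c' = (u, l)"
    by fastforce
  have stationary: "DF p = - (transpose A *v q)"
    using \<open>kkt c\<close> by (simp add: c kkt_point_def eq_neg_iff_add_eq_0)
  have "(u - p) \<bullet> (DF u - DF p) = 0"
    using lyapunov_rate_eq[OF \<open>kkt c\<close>, of c'] \<open>lyapunov_rate c c' = 0\<close> feasible alpha_pos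
    by (simp add: c c')
  then have "DF u = DF p"
    by (rule convex_on_gderiv_eq_if_inner_eq_0[OF convex grad])
  then have "primal_field c' = - \<alpha> *\<^sub>R (transpose A *v (l - q))"
    using feasible by (simp add: primal_field_def c' stationary vector_matrix_mult_diff_distrib)
  with \<open>A *v primal_field c' = 0\<close> have "A *v (transpose A *v (l - q)) = 0"
    using alpha_pos by (simp add: linear_neg[OF matrix_vector_mul_linear] matrix_vector_mult_scaleR)
  then have "transpose A *v (l - q) = 0"
    by (rule transpose_mult_eq_0_if_mult_transpose_mult_eq_0)
  then show "kkt c'"
    using feasible \<open>DF u = DF p\<close> stationary
    by (simp add: kkt_point_def c' vector_matrix_mult_diff_distrib)
qed

lemma kkt_point_if_limit_point:
  assumes "kkt c" and s: "filterlim s at_top sequentially" and lim: "(\<lambda>n. z (s n)) \<longlonglongrightarrow> c'"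
  shows "kkt c'"
proof (rule kkt_point_if_rate_and_residuals_vanish[OF \<open>kkt c\<close>])
  show "lyapunov_rate c c' = 0"
  proof (rule eq_limit_at_limit_point[where g = z, OF _ _ s lim])
    show "continuous_on UNIV (lyapunov_rate c)"
      unfolding lyapunov_rate_def by (intro continuous_intros continuous_on_primal_field)
    show "((\<lambda>t. lyapunov_rate c (z t)) \<longlongrightarrow> 0) at_top"
      by (rule lyapunov_rate_tendsto_0[OF \<open>kkt c\<close>])
  qed
  have "A *v fst c' - b = 0"
  proof (rule eq_limit_at_limit_point[where g = z, OF _ _ s lim])
    show "continuous_on UNIV (\<lambda>w. A *v fst w - b)"
      by (intro continuous_intros)
    show "((\<lambda>t. A *v fst (z t) - b) \<longlongrightarrow> 0) at_top"
      using residual_tendsto_0[OF \<open>kkt c\<close>] by (simp add: z_def)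
  qed
  then show "A *v fst c' = b"
    by simp
  show "A *v primal_field c' = 0"
  proof (rule eq_limit_at_limit_point[where g = z, OF _ _ s lim])
    show "continuous_on UNIV (\<lambda>w. A *v primal_field w)"
      by (intro continuous_intros continuous_on_primal_field)
    show "((\<lambda>t. A *v primal_field (z t)) \<longlongrightarrow> 0) at_top"
      by (rule A_primal_field_tendsto_0[OF \<open>kkt c\<close>])
  qed
qed

lemma tendsto_kkt_limit_point:
  assumes "kkt c'" and s: "filterlim s at_top sequentially" and lim: "(\<lambda>n. z (s n)) \<longlonglongrightarrow> c'"
  shows "(z \<longlongrightarrow> c') at_top"
proof -
  define W_inf where "W_inf = (INF t\<in>{0..}. lyapunov c' (z t))"
  have W: "((\<lambda>t. lyapunov c' (z t)) \<longlongrightarrow> W_inf) at_top"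
    unfolding W_inf_def using lyapunov_antimono[OF assms(1)] lyapunov_nonneg by (rule tendsto_INF_if_antimono)
  have "continuous_on UNIV (lyapunov c')"
    unfolding lyapunov_def by (intro continuous_intros)
  then have "lyapunov c' c' = W_inf"
    by (rule eq_limit_at_limit_point[where g = z, OF _ W s lim])
  then have "((\<lambda>t. (1 + 1 / \<alpha>) * lyapunov c' (z t)) \<longlongrightarrow> 0) at_top"
    using tendsto_mult[OF tendsto_const W, of "1 + 1 / \<alpha>"] by (simp add: lyapunov_def)
  then have "((\<lambda>t. sqrt ((1 + 1 / \<alpha>) * lyapunov c' (z t))) \<longlongrightarrow> 0) at_top"
    using tendsto_real_sqrt by force
  moreover have "\<forall>\<^sub>F t in at_top. norm (z t - c') \<le> sqrt ((1 + 1 / \<alpha>) * lyapunov c' (z t))"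
    by (intro always_eventually allI real_le_rsqrt norm_le_lyapunov)
  ultimately have "((\<lambda>t. z t - c') \<longlongrightarrow> 0) at_top"
    by (rule Lim_null_comparison[rotated])
  then show ?thesis
    by (simp add: LIM_zero_iff)
qed

theorem tendsto_kkt_point:
  assumes "kkt c"
  shows "\<exists>c'. kkt c' \<and> (z \<longlongrightarrow> c') at_top"
proof -
  obtain s c' where "filterlim s at_top sequentially" and "(\<lambda>n. z (s n)) \<longlonglongrightarrow> c'"
    using limit_point_exists[OF assms] .
  then show ?thesis
    using kkt_point_if_limit_point[OF assms] tendsto_kkt_limit_point by blast
qed

end

theorem proposition1:
  fixes blk :: "'d::finite \<Rightarrow> 'n::finite"
    and f :: "'n \<Rightarrow> real^'d \<Rightarrow> real"
    and g :: "'n \<Rightarrow> real^'d \<Rightarrow> real^'d"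
    and A :: "real^'d^'p::finite"
    and b :: "real^'p"
    and \<alpha> :: real
    and x :: "real \<Rightarrow> real^'d"
    and lam :: "real \<Rightarrow> real^'p"
  assumes block: "\<And>i u v. (\<forall>j. blk j = i \<longrightarrow> u $ j = v $ j) \<Longrightarrow> f i u = f i v"
    and convex: "\<And>i. convex_on UNIV (f i)"
    and grad: "\<And>i u. GDERIV (f i) u :> g i u"
    and lip: "\<And>i. locally_lipschitz (g i)"
    and feasible: "\<exists>u. A *v u = b"
    and optimal: "\<exists>u. A *v u = b \<and> (\<forall>v. A *v v = b \<longrightarrow> (\<Sum>i\<in>UNIV. f i u) \<le> (\<Sum>i\<in>UNIV. f i v))"
    and alpha: "\<alpha> > 0"
    and ode_x: "\<And>t. t \<ge> 0 \<Longrightarrow> (x has_vector_derivative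
        (- \<alpha> *\<^sub>R ((\<Sum>i\<in>UNIV. g i (x t)) + transpose A *v lam t)
         - transpose A *v (A *v x t - b))) (at t within {0..})"
    and ode_lam: "\<And>t. t \<ge> 0 \<Longrightarrow> (lam has_vector_derivative (A *v x t - b)) (at t within {0..})"
  shows "\<exists>xs ls. is_saddle_point \<alpha> (\<lambda>u. \<Sum>i\<in>UNIV. f i u) A b xs ls \<and>
           ((\<lambda>t. (x t, lam t)) \<longlongrightarrow> (xs, ls)) at_top"
proof -
  define F where "F u = (\<Sum>i\<in>UNIV. f i u)" for u
  define DF where "DF u = (\<Sum>i\<in>UNIV. g i u)" for u
  have convex_F: "convex_on UNIV F"
    unfolding F_def by (intro convex_on_sum_fun convex) auto
  have grad_F: "GDERIV F u :> DF u" for u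
    using grad unfolding F_def DF_def gderiv_def inner_sum_right by (intro has_derivative_sum) auto
  have "continuous_on UNIV DF"
    unfolding DF_def by (intro continuous_intros locally_lipschitz_imp_continuous_on lip)
  then interpret apgd F DF A b \<alpha> x lam
    using convex_F grad_F alpha ode_x ode_lam by unfold_locales (simp_all add: DF_def)
  obtain p where "A *v p = b" and "\<And>v. A *v v = b \<Longrightarrow> F p \<le> F v"
    using optimal unfolding F_def by blast
  then obtain q where "kkt (p, q)"
    using kkt_point_if_minimizer[OF grad_F] by blast
  then obtain xs ls where "kkt (xs, ls)" and "(z \<longlongrightarrow> (xs, ls)) at_top"
    using tendsto_kkt_point by (metis surj_pair)
  then have "is_saddle_point \<alpha> F A b xs ls" and "((\<lambda>t. (x t, lam t)) \<longlongrightarrow> (xs, ls)) at_top"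
    using is_saddle_point_if_kkt_point[OF convex_F grad_F alpha] by (simp_all add: z_def[abs_def])
  then show ?thesis
    unfolding F_def[abs_def] by blast
qed

end
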